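(* Let $d\in\{2,3\}$, $\kappa>0$, and let $\mathcal{X}\subset\mathbb{R}^d$ be a connected bounded open set. Let $a=(a_1,a_2)\in(\mathbb{C}\setminus\{0\})^2$ and $x=(x_1,x_2)\in\mathcal{X}^2$, and define $\alpha=\kappa^2|G(x_1,x_2)|\sqrt{|a_1||a_2|}$. If $\alpha<1$, then $$\sup_{(\hat{x},\theta)\in\mathbb{S}^{d-1}\times\mathbb{S}^{d-1}}|u^{\infty}(\hat x,\theta)-u^{\infty,b}(\hat x,\theta)|\leq \frac{\kappa^2}{4\pi}\,\frac{2\alpha}{1-\alpha^2}\Big(\alpha\frac{|a_1|+|a_2|}{2}+\sqrt{|a_1||a_2|}\Big).$$
   Context: $G$ is the Green function of the Helmholtz equation with wavenumber $\kappa$: $G(x,y)=\frac{i}{4}H_0^{(1)}(\kappa|x-y|)$ if $d=2$ (with $H_0^{(1)}$ the Hankel function of the first kind and order zero) and $G(x,y)=\frac{e^{i\kappa|x-y|}}{4\pi|x-y|}$ if $d=3$. For $s$ scatterers with intensities $a\in(\mathbb{C}\setminus\{0\})^s$ and pairwise distinct locations $x\in\mathcal{X}^s$, and an incident direction $\theta\in\mathbb{S}^{d-1}$, let $u^{\mathrm{in}}(y)=e^{i\kappa\theta\cdot y}$ and let $u=(u_i)_{1\le i\le s}$ be the solution of the Foldy–Lax system $u_i=u^{\mathrm{in}}(x_i)+\kappa^2\sum_{j\neq i}G(x_i,x_j)a_ju_j$, $i=1,\dots,s$. The far field pattern is $u^{\infty}(\hat x,\theta)=\frac{\kappa^2}{4\pi}\sum_{i=1}^s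 a_iu_ie^{-i\kappa\hat x\cdot x_i}$ and its Born approximation is $u^{\infty,b}(\hat x,\theta)=\frac{\kappa^2}{4\pi}\sum_{i=1}^s a_ie^{-i\kappa(\hat x-\theta)\cdot x_i}$, for $(\hat x,\theta)\in\mathbb{S}^{d-1}\times\mathbb{S}^{d-1}$. Here $s=2$. *)

theory Defs
  imports "HOL-Analysis.Analysis"
begin

text \<open>Bessel functions of order zero on the positive real axis, via their
standard power series (Abramowitz--Stegun 9.1.10 and 9.1.13).\<close>

definition bessel_J0 :: "real \<Rightarrow> real" where
  "bessel_J0 t = (\<Sum>k. (-1) ^ k * (t / 2) ^ (2 * k) / (fact k) ^ 2)"

definition bessel_Y0 :: "real \<Rightarrow> real" where
  "bessel_Y0 t = (2 / pi) * ((ln (t / 2) + euler_mascheroni) * bessel_J0 t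
      + (\<Sum>k. (-1) ^ (k + 1) * harm k * (t / 2) ^ (2 * k) / (fact k) ^ 2))"

definition hankel1_0 :: "real \<Rightarrow> complex" where
  "hankel1_0 t = complex_of_real (bessel_J0 t) + \<i> * complex_of_real (bessel_Y0 t)"

definition green :: "real \<Rightarrow> real ^ 'n \<Rightarrow> real ^ 'n \<Rightarrow> complex" where
  "green \<kappa> x y =
     (if CARD('n) = 2 then (\<i> / 4) * hankel1_0 (\<kappa> * dist x y)
      else exp (\<i> * complex_of_real (\<kappa> * dist x y)) / complex_of_real (4 * pi * dist x y))"

definition u_in :: "real \<Rightarrow> real ^ 'n \<Rightarrow> real ^ 'n \<Rightarrow> complex" where
  "u_in \<kappa> \<theta> y = exp (\<i> * complex_of_real (\<kappa> * (\<theta> \<bullet> y)))"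

definition foldy_lax_solution ::
  "real \<Rightarrow> nat \<Rightarrow> (nat \<Rightarrow> complex) \<Rightarrow> (nat \<Rightarrow> real ^ 'n) \<Rightarrow> real ^ 'n \<Rightarrow> (nat \<Rightarrow> complex) \<Rightarrow> bool" where
  "foldy_lax_solution \<kappa> s a x \<theta> u \<longleftrightarrow>
     (\<forall>i<s. u i = u_in \<kappa> \<theta> (x i)
        + complex_of_real (\<kappa>\<^sup>2) * (\<Sum>j\<in>{..<s} - {i}. green \<kappa> (x i) (x j) * a j * u j))"

definition far_field ::
  "real \<Rightarrow> nat \<Rightarrow> (nat \<Rightarrow> complex) \<Rightarrow> (nat \<Rightarrow> real ^ 'n) \<Rightarrow> (nat \<Rightarrow> complex) \<Rightarrow> real ^ 'n \<Rightarrow> complex" where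
  "far_field \<kappa> s a x u xh =
     complex_of_real (\<kappa>\<^sup>2 / (4 * pi)) *
       (\<Sum>i<s. a i * u i * exp (- \<i> * complex_of_real (\<kappa> * (xh \<bullet> x i))))"

definition born_far_field ::
  "real \<Rightarrow> nat \<Rightarrow> (nat \<Rightarrow> complex) \<Rightarrow> (nat \<Rightarrow> real ^ 'n) \<Rightarrow> real ^ 'n \<Rightarrow> real ^ 'n \<Rightarrow> complex" where
  "born_far_field \<kappa> s a x xh \<theta> =
     complex_of_real (\<kappa>\<^sup>2 / (4 * pi)) *
       (\<Sum>i<s. a i * exp (- \<i> * complex_of_real (\<kappa> * ((xh - \<theta>) \<bullet> x i))))"

end

theory Submission
  imports Defs
begin

text \<open>Write \<open>e\<^sub>i\<close> for the incident wave at \<open>x\<^sub>i\<close>, \<open>G\<close> for \<open>\<kappa>\<^sup>2 G(x\<^sub>1, x\<^sub>2)\<close>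
and \<open>D = G\<^sup>2 a\<^sub>1 a\<^sub>2\<close>, so that \<open>|D| = \<alpha>\<^sup>2\<close>. Substituting one Foldy--Lax equation into the
other gives \<open>(1 - D)(u\<^sub>i - e\<^sub>i) = G a\<^sub>j e\<^sub>j + D e\<^sub>i\<close>; as plane waves are unimodular and
\<open>|1 - D| \<ge> 1 - \<alpha>\<^sup>2\<close>, this bounds \<open>|u\<^sub>i - e\<^sub>i|\<close>. The far field and its Born approximation
differ by \<open>\<kappa>\<^sup>2/(4\<pi>)\<close> times a sum of unimodular multiples of \<open>a\<^sub>i (u\<^sub>i - e\<^sub>i)\<close>.\<close>

lemma green_commute: "green \<kappa> x y = green \<kappa> y x"
  unfolding green_def by (simp add: dist_commute)

lemma norm_u_in [simp]: "cmod (u_in \<kappa> \<theta> y) = 1"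
  unfolding u_in_def by (simp add: norm_exp_i_times)

lemma norm_exp_minus_i_times [simp]: "cmod (exp (- \<i> * complex_of_real t)) = 1"
  using norm_exp_i_times[of "- t"] by simp

lemma foldy_lax_solution_two:
  assumes "foldy_lax_solution \<kappa> 2 a x \<theta> u"
  shows "u 0 = u_in \<kappa> \<theta> (x 0) + complex_of_real (\<kappa>\<^sup>2) * green \<kappa> (x 0) (x 1) * a 1 * u 1"
    and "u 1 = u_in \<kappa> \<theta> (x 1) + complex_of_real (\<kappa>\<^sup>2) * green \<kappa> (x 0) (x 1) * a 0 * u 0"
proof -
  have eq: "u i = u_in \<kappa> \<theta> (x i)
      + complex_of_real (\<kappa>\<^sup>2) * (\<Sum>j\<in>{..<2} - {i}. green \<kappa> (x i) (x j) * a j * u j)" if "i < 2" for i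
    using assms that unfolding foldy_lax_solution_def by blast
  have "{..<2::nat} - {0} = {1}" and "{..<2::nat} - {1} = {0}" by auto
  with eq[of 0] eq[of 1] show
    "u 0 = u_in \<kappa> \<theta> (x 0) + complex_of_real (\<kappa>\<^sup>2) * green \<kappa> (x 0) (x 1) * a 1 * u 1"
    "u 1 = u_in \<kappa> \<theta> (x 1) + complex_of_real (\<kappa>\<^sup>2) * green \<kappa> (x 0) (x 1) * a 0 * u 0"
    by (simp_all add: mult.assoc green_commute[of \<kappa> "x (Suc 0)" "x 0"])
qed

lemma far_field_minus_born_far_field:
  "far_field \<kappa> s a x u xh - born_far_field \<kappa> s a x xh \<theta>
     = complex_of_real (\<kappa>\<^sup>2 / (4 * pi)) *
       (\<Sum>i<s. a i * (u i - u_in \<kappa> \<theta> (x i)) * exp (- \<i> * complex_of_real (\<kappa> * (xh \<bullet> x i))))"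
proof -
  have "exp (- \<i> * complex_of_real (\<kappa> * ((xh - \<theta>) \<bullet> x i)))
      = u_in \<kappa> \<theta> (x i) * exp (- \<i> * complex_of_real (\<kappa> * (xh \<bullet> x i)))" for i
    unfolding u_in_def by (simp add: inner_diff_left algebra_simps flip: exp_add)
  then show ?thesis
    unfolding far_field_def born_far_field_def
    by (simp only:) (simp add: algebra_simps sum_subtractf)
qed

lemma norm_far_field_minus_born_far_field_le:
  "cmod (far_field \<kappa> s a x u xh - born_far_field \<kappa> s a x xh \<theta>)
     \<le> \<kappa>\<^sup>2 / (4 * pi) * (\<Sum>i<s. cmod (a i) * cmod (u i - u_in \<kappa> \<theta> (x i)))"
proof -
  have c: "cmod (complex_of_real (\<kappa>\<^sup>2 / (4 * pi))) = \<kappa>\<^sup>2 / (4 * pi)"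
    by (simp only: norm_of_real) simp
  have "cmod (\<Sum>i<s. a i * (u i - u_in \<kappa> \<theta> (x i)) * exp (- \<i> * complex_of_real (\<kappa> * (xh \<bullet> x i))))
      \<le> (\<Sum>i<s. cmod (a i) * cmod (u i - u_in \<kappa> \<theta> (x i)))"
    by (rule order_trans[OF norm_sum]) (simp add: norm_mult)
  then show ?thesis
    unfolding far_field_minus_born_far_field norm_mult c by (intro mult_left_mono) simp_all
qed

lemma two_scatterer_deviation:
  fixes G a0 a1 e0 e1 u0 u1 :: "'a :: comm_ring_1"
  assumes "u0 = e0 + G * a1 * u1" and "u1 = e1 + G * a0 * u0"
  shows "(1 - G\<^sup>2 * a0 * a1) * (u0 - e0) = G * a1 * e1 + G\<^sup>2 * a0 * a1 * e0"
proof -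
  have "u0 - e0 = G * a1 * e1 + G\<^sup>2 * a0 * a1 * u0"
    using assms by (simp add: algebra_simps power2_eq_square)
  then show ?thesis by (simp add: algebra_simps)
qed

lemma two_scatterer_deviation_bound:
  fixes G a0 a1 e0 e1 u0 u1 :: complex
  assumes "u0 = e0 + G * a1 * u1" and "u1 = e1 + G * a0 * u0"
    and "cmod e0 = 1" and "cmod e1 = 1"
  shows "cmod (u0 - e0) * (1 - cmod (G\<^sup>2 * a0 * a1)) \<le> cmod G * cmod a1 + cmod (G\<^sup>2 * a0 * a1)"
proof -
  have "cmod (u0 - e0) * (1 - cmod (G\<^sup>2 * a0 * a1)) \<le> cmod (u0 - e0) * cmod (1 - G\<^sup>2 * a0 * a1)"
    using norm_triangle_ineq2[of 1 "G\<^sup>2 * a0 * a1"] by (intro mult_left_mono) simp_all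
  also have "\<dots> = cmod ((1 - G\<^sup>2 * a0 * a1) * (u0 - e0))"
    by (simp add: norm_mult)
  also have "\<dots> = cmod (G * a1 * e1 + G\<^sup>2 * a0 * a1 * e0)"
    by (simp only: two_scatterer_deviation[OF assms(1,2)])
  also have "\<dots> \<le> cmod G * cmod a1 + cmod (G\<^sup>2 * a0 * a1)"
    using norm_triangle_ineq[of "G * a1 * e1" "G\<^sup>2 * a0 * a1 * e0"] assms(3,4)
    by (simp add: norm_mult)
  finally show ?thesis .
qed

lemma two_scatterer_weighted_deviation_bound:
  fixes G a0 a1 e0 e1 u0 u1 :: complex
  defines "\<alpha> \<equiv> cmod G * sqrt (cmod a0 * cmod a1)"
  assumes "u0 = e0 + G * a1 * u1" and "u1 = e1 + G * a0 * u0"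
    and "cmod e0 = 1" and "cmod e1 = 1" and "\<alpha> < 1"
  shows "cmod a0 * cmod (u0 - e0) + cmod a1 * cmod (u1 - e1)
     \<le> 2 * \<alpha> / (1 - \<alpha>\<^sup>2) * (\<alpha> * (cmod a0 + cmod a1) / 2 + sqrt (cmod a0 * cmod a1))"
proof -
  define s where "s = sqrt (cmod a0 * cmod a1)"
  have s2: "s\<^sup>2 = cmod a0 * cmod a1" and "s \<ge> 0" unfolding s_def by simp_all
  have D0: "cmod (G\<^sup>2 * a0 * a1) = \<alpha>\<^sup>2" and D1: "cmod (G\<^sup>2 * a1 * a0) = \<alpha>\<^sup>2"
    unfolding \<alpha>_def by (simp_all add: norm_mult norm_power power_mult_distrib)
  have "\<alpha>\<^sup>2 < 1"
    using \<open>\<alpha> < 1\<close> \<open>s \<ge> 0\<close> unfolding \<alpha>_def s_def[symmetric]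
    by (simp add: abs_square_less_1)
  have B0: "cmod (u0 - e0) * (1 - \<alpha>\<^sup>2) \<le> cmod G * cmod a1 + \<alpha>\<^sup>2"
    using two_scatterer_deviation_bound[OF assms(2,3,4,5)] D0 by simp
  have B1: "cmod (u1 - e1) * (1 - \<alpha>\<^sup>2) \<le> cmod G * cmod a0 + \<alpha>\<^sup>2"
    using two_scatterer_deviation_bound[OF assms(3,2,5,4)] D1 by simp
  have "(cmod a0 * cmod (u0 - e0) + cmod a1 * cmod (u1 - e1)) * (1 - \<alpha>\<^sup>2)
      = cmod a0 * (cmod (u0 - e0) * (1 - \<alpha>\<^sup>2)) + cmod a1 * (cmod (u1 - e1) * (1 - \<alpha>\<^sup>2))"
    by (simp add: algebra_simps)
  also have "\<dots> \<le> cmod a0 * (cmod G * cmod a1 + \<alpha>\<^sup>2) + cmod a1 * (cmod G * cmod a0 + \<alpha>\<^sup>2)"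
    by (intro add_mono mult_left_mono B0 B1) auto
  also have "\<dots> = 2 * cmod G * s\<^sup>2 + \<alpha>\<^sup>2 * (cmod a0 + cmod a1)"
    by (simp add: s2 algebra_simps)
  also have "\<dots> = 2 * \<alpha> * (\<alpha> * (cmod a0 + cmod a1) / 2 + s)"
    unfolding \<alpha>_def s_def[symmetric] by (simp add: algebra_simps power2_eq_square)
  finally show ?thesis
    using \<open>\<alpha>\<^sup>2 < 1\<close> unfolding s_def by (simp add: pos_le_divide_eq)
qed

theorem proposition1:
  fixes \<kappa> :: real and X :: "(real ^ 'n) set"
    and a :: "nat \<Rightarrow> complex" and x :: "nat \<Rightarrow> real ^ 'n"
  assumes dim: "CARD('n) = 2 \<or> CARD('n) = 3"
    and kappa: "\<kappa> > 0"
    and X: "connected X" "bounded X" "open X"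
    and a: "a 0 \<noteq> 0" "a 1 \<noteq> 0"
    and x: "x 0 \<in> X" "x 1 \<in> X" "x 0 \<noteq> x 1"
    and alpha: "\<kappa>\<^sup>2 * cmod (green \<kappa> (x 0) (x 1)) * sqrt (cmod (a 0) * cmod (a 1)) < 1"
  shows "\<forall>xh \<in> sphere 0 1. \<forall>\<theta> \<in> sphere 0 1. \<forall>u. foldy_lax_solution \<kappa> 2 a x \<theta> u \<longrightarrow>
     (let \<alpha> = \<kappa>\<^sup>2 * cmod (green \<kappa> (x 0) (x 1)) * sqrt (cmod (a 0) * cmod (a 1)) in
      cmod (far_field \<kappa> 2 a x u xh - born_far_field \<kappa> 2 a x xh \<theta>)
        \<le> \<kappa>\<^sup>2 / (4 * pi) * (2 * \<alpha> / (1 - \<alpha>\<^sup>2))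
           * (\<alpha> * (cmod (a 0) + cmod (a 1)) / 2 + sqrt (cmod (a 0) * cmod (a 1))))"
proof (intro ballI allI impI)
  fix xh \<theta> :: "real ^ 'n" and u
  assume "foldy_lax_solution \<kappa> 2 a x \<theta> u"
  define G where "G = complex_of_real (\<kappa>\<^sup>2) * green \<kappa> (x 0) (x 1)"
  define \<alpha> where "\<alpha> = \<kappa>\<^sup>2 * cmod (green \<kappa> (x 0) (x 1)) * sqrt (cmod (a 0) * cmod (a 1))"
  have \<alpha>: "\<alpha> = cmod G * sqrt (cmod (a 0) * cmod (a 1))"
    unfolding \<alpha>_def G_def by (simp add: norm_mult norm_power)
  note foldy_lax = foldy_lax_solution_two[OF \<open>foldy_lax_solution \<kappa> 2 a x \<theta> u\<close>, folded G_def]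
  have deviation: "cmod (a 0) * cmod (u 0 - u_in \<kappa> \<theta> (x 0)) + cmod (a 1) * cmod (u 1 - u_in \<kappa> \<theta> (x 1))
      \<le> 2 * \<alpha> / (1 - \<alpha>\<^sup>2) * (\<alpha> * (cmod (a 0) + cmod (a 1)) / 2 + sqrt (cmod (a 0) * cmod (a 1)))"
    unfolding \<alpha>
    by (rule two_scatterer_weighted_deviation_bound[OF foldy_lax norm_u_in norm_u_in
        alpha[folded \<alpha>_def, unfolded \<alpha>]])
  have "cmod (far_field \<kappa> 2 a x u xh - born_far_field \<kappa> 2 a x xh \<theta>)
      \<le> \<kappa>\<^sup>2 / (4 * pi) * (\<Sum>i<2. cmod (a i) * cmod (u i - u_in \<kappa> \<theta> (x i)))"
    by (rule norm_far_field_minus_born_far_field_le)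
  also have "\<dots> = \<kappa>\<^sup>2 / (4 * pi) *
      (cmod (a 0) * cmod (u 0 - u_in \<kappa> \<theta> (x 0)) + cmod (a 1) * cmod (u 1 - u_in \<kappa> \<theta> (x 1)))"
    by (simp add: numeral_2_eq_2)
  also have "\<dots> \<le> \<kappa>\<^sup>2 / (4 * pi) *
      (2 * \<alpha> / (1 - \<alpha>\<^sup>2) * (\<alpha> * (cmod (a 0) + cmod (a 1)) / 2 + sqrt (cmod (a 0) * cmod (a 1))))"
    by (rule mult_left_mono[OF deviation]) simp
  finally show "let \<alpha> = \<alpha> in
      cmod (far_field \<kappa> 2 a x u xh - born_far_field \<kappa> 2 a x xh \<theta>)
        \<le> \<kappa>\<^sup>2 / (4 * pi) * (2 * \<alpha> / (1 - \<alpha>\<^sup>2))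
           * (\<alpha> * (cmod (a 0) + cmod (a 1)) / 2 + sqrt (cmod (a 0) * cmod (a 1)))"
    by (simp only: Let_def mult.assoc)
qed

end
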